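(* Let $\rho$ be a generalised Group 2 two-qubit $X$-state with maximally-mixed subsystems, of type $t\in\{1,2\}$, with real parameters $\beta_0,\beta_1,\beta_2,\beta_3,\beta_4$. Define the points of $\mathbb{R}^2$ $$C:=(\beta_4,\beta_3),\quad D:=(\beta_1,\beta_2),\quad E:=(\beta_1,-\beta_2),\quad F:=(\beta_4,-\beta_3),$$ and put $r:=1-|\beta_0|$ and $R:=1+|\beta_0|$. For $P\in\mathbb{R}^2$ and $s\ge 0$, let $(P,s)$ denote the closed disc with center $P$ and radius $s$; for $\epsilon\in\{\pm1\}$ and $A\subseteq\mathbb{R}^2$, let $\epsilon A=\{\epsilon a: a\in A\}$. (i) For given $\beta_0,\beta_3,\beta_4$, let $\mathcal{V}:=(C,r)\cap(-C,R)$, $\mathcal{S}:=(C,r)\cap(-C,r)$ and $\mathcal{E}:=\mathcal{V}\setminus\mathcal{S}$. These are the regions of validity, separability and entanglement, in the following sense. $\rho$ is valid if and only if $E\in(-1)^t\operatorname{sgn}(\beta_0)\mathcal{V}$. $\rho$ is separable if $E\in\mathcal{S}$. $\rho$ is entangled if $E\in(-1)^t\operatorname{sgn}(\beta_0)\mathcal{E}$. Moreover, $\mathcal{V}\neq\emptyset$ if and only if $\beta_3^2+\beta_4^2\le 1$, and $\mathcal{S}\neq\emptyset$ if and only if $\beta_3^2+\beta_4^2\le(1-|\beta_0|)^2$. (ii) Equivalently, for given $\beta_0,\beta_1,\beta_2$, let $\mathcal{V}':=(D,r)\cap(-D,R)$, $\mathcal{S}':=(D,r)\cap(-D,r)$ and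 $\mathcal{E}':=\mathcal{V}'\setminus\mathcal{S}'$. Then $\rho$ is valid if and only if $F\in(-1)^t\operatorname{sgn}(\beta_0)\mathcal{V}'$. $\rho$ is separable if $F\in\mathcal{S}'$. $\rho$ is entangled if $F\in(-1)^t\operatorname{sgn}(\beta_0)\mathcal{E}'$. Moreover, $\mathcal{V}'\neq\emptyset$ if and only if $\beta_1^2+\beta_2^2\le1$, and $\mathcal{S}'\neq\emptyset$ if and only if $\beta_1^2+\beta_2^2\le(1-|\beta_0|)^2$.
   Context: A two-qubit Hermitian trace-one $4\times4$ matrix $\rho$ is valid if it is positive semidefinite. It is separable if it is valid and its partial transpose $\rho^\Gamma$ is positive semidefinite. It is entangled if it is valid and $\rho^\Gamma$ is not positive semidefinite. Let $L^{+}:=\sqrt{(\beta_1+\beta_4)^2+(\beta_2-\beta_3)^2}$ and $L^{-}:=\sqrt{(\beta_1-\beta_4)^2+(\beta_2+\beta_3)^2}$. A generalised Group 2 $X$-state with maximally-mixed subsystems and parameters $\beta_0,\dots,\beta_4$ is of Type I ($t=1$) if: - the eigenvalues of $\rho$ are $\tfrac14(1+\beta_0\pm L^{-})$ and $\tfrac14(1-\beta_0\pm L^{+})$; - the eigenvalues of $\rho^\Gamma$ are $\tfrac14(1+\beta_0\pm L^{+})$ and $\tfrac14(1-\beta_0\pm L^{-})$. It is of Type II ($t=2$) if these two spectra are interchanged. Such states are $\rho=\tfrac14(I\otimes I+\sum c_q q)$ with $q$ ranging over the nontrivial Pauli operators commuting with some $A\otimes B$, $A,B\in\{X,Y,Z\}$,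 and the local coefficients set to zero. Example (Type I): $\rho=\tfrac14(I\otimes I+\beta_0 ZZ+\beta_1 XX+\beta_2 XY+\beta_3 YX+\beta_4 YY)$. Here $\beta_0$ is the coefficient of the correlation operator sharing no tensor factor with the others, and $\begin{pmatrix}\beta_1&\beta_2\\ \beta_3&\beta_4\end{pmatrix}$ is the remaining $2\times2$ block of the correlation matrix. $\operatorname{sgn}(\beta_0)\in\{\pm1\}$ denotes the sign of $\beta_0$. *)

theory Defs
  imports "Jordan_Normal_Form.Matrix" "Jordan_Normal_Form.Char_Poly"
begin

section \<open>Two-qubit matrices (indices 0..3, i = 2*a + b for qubits a,b)\<close>

text \<open>Pauli matrices: 0 = I, 1 = X, 2 = Y, 3 = Z.\<close>
definition pauli :: "nat \<Rightarrow> complex mat" where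
  "pauli k = mat 2 2 (\<lambda>(i,j).
     if k = 0 then (if i = j then 1 else 0)
     else if k = 1 then (if i \<noteq> j then 1 else 0)
     else if k = 2 then (if i = 0 \<and> j = 1 then - \<i> else if i = 1 \<and> j = 0 then \<i> else 0)
     else (if i = j then (if i = 0 then 1 else -1) else 0))"

definition kron2 :: "complex mat \<Rightarrow> complex mat \<Rightarrow> complex mat" where
  "kron2 A B = mat 4 4 (\<lambda>(i,j). A $$ (i div 2, j div 2) * B $$ (i mod 2, j mod 2))"

text \<open>Partial transpose (on the second qubit).\<close>
definition ptrans :: "complex mat \<Rightarrow> complex mat" where
  "ptrans \<rho> = mat 4 4 (\<lambda>(i,j). \<rho> $$ (2 * (i div 2) + j mod 2, 2 * (j div 2) + i mod 2))"

definition hermitian4 :: "complex mat \<Rightarrow> bool" where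
  "hermitian4 M \<longleftrightarrow> M \<in> carrier_mat 4 4 \<and> (\<forall>i<4. \<forall>j<4. M $$ (i,j) = cnj (M $$ (j,i)))"

definition trace4 :: "complex mat \<Rightarrow> complex" where
  "trace4 M = (\<Sum>i<4. M $$ (i,i))"

definition psd4 :: "complex mat \<Rightarrow> bool" where
  "psd4 M \<longleftrightarrow> hermitian4 M \<and>
     (\<forall>v :: nat \<Rightarrow> complex. let q = (\<Sum>i<4. \<Sum>j<4. cnj (v i) * M $$ (i,j) * v j)
                              in q \<in> \<real> \<and> 0 \<le> Re q)"

definition valid :: "complex mat \<Rightarrow> bool" where
  "valid \<rho> \<longleftrightarrow> psd4 \<rho>"

definition separable :: "complex mat \<Rightarrow> bool" where
  "separable \<rho> \<longleftrightarrow> valid \<rho> \<and> psd4 (ptrans \<rho>)"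

definition entangled :: "complex mat \<Rightarrow> bool" where
  "entangled \<rho> \<longleftrightarrow> valid \<rho> \<and> \<not> psd4 (ptrans \<rho>)"

text \<open>rho = 1/4 (I I + b0 A B + b1 P1 Q1 + b2 P1 Q2 + b3 P2 Q1 + b4 P2 Q2), where
  {A,P1,P2} = {X,Y,Z} = {B,Q1,Q2}: the Paulis commuting with A B, with no local terms.
  (b1 b2; b3 b4) is the remaining 2x2 block of the correlation matrix (rows = first qubit),
  in any ordering of the remaining Paulis.\<close>
definition group2_form :: "complex mat \<Rightarrow> real \<Rightarrow> real \<Rightarrow> real \<Rightarrow> real \<Rightarrow> real \<Rightarrow> bool" where
  "group2_form \<rho> b0 b1 b2 b3 b4 \<longleftrightarrow>
    (\<exists>A P1 P2 B Q1 Q2. {A, P1, P2} = {1,2,3::nat} \<and> {B, Q1, Q2} = {1,2,3::nat} \<and>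
       \<rho> = (1/4 :: complex) \<cdot>\<^sub>m
         (kron2 (pauli 0) (pauli 0)
          + complex_of_real b0 \<cdot>\<^sub>m kron2 (pauli A) (pauli B)
          + complex_of_real b1 \<cdot>\<^sub>m kron2 (pauli P1) (pauli Q1)
          + complex_of_real b2 \<cdot>\<^sub>m kron2 (pauli P1) (pauli Q2)
          + complex_of_real b3 \<cdot>\<^sub>m kron2 (pauli P2) (pauli Q1)
          + complex_of_real b4 \<cdot>\<^sub>m kron2 (pauli P2) (pauli Q2)))"

definition Lplus :: "real \<Rightarrow> real \<Rightarrow> real \<Rightarrow> real \<Rightarrow> real" where
  "Lplus b1 b2 b3 b4 = sqrt ((b1 + b4)\<^sup>2 + (b2 - b3)\<^sup>2)"

definition Lminus :: "real \<Rightarrow> real \<Rightarrow> real \<Rightarrow> real \<Rightarrow> real" where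
  "Lminus b1 b2 b3 b4 = sqrt ((b1 - b4)\<^sup>2 + (b2 + b3)\<^sup>2)"

definition has_spectrum4 :: "complex mat \<Rightarrow> real \<Rightarrow> real \<Rightarrow> real \<Rightarrow> real \<Rightarrow> bool" where
  "has_spectrum4 M a b c d \<longleftrightarrow>
     char_poly M = [:- complex_of_real a, 1:] * [:- complex_of_real b, 1:]
                 * [:- complex_of_real c, 1:] * [:- complex_of_real d, 1:]"


definition group2_type :: "nat \<Rightarrow> complex mat \<Rightarrow> real \<Rightarrow> real \<Rightarrow> real \<Rightarrow> real \<Rightarrow> real \<Rightarrow> bool" where
  "group2_type t \<rho> b0 b1 b2 b3 b4 \<longleftrightarrow>
    (let Lp = Lplus b1 b2 b3 b4; Lm = Lminus b1 b2 b3 b4;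
         S1 = has_spectrum4 \<rho>;  S2 = has_spectrum4 (ptrans \<rho>) in
     (t = 1 \<and> S1 ((1+b0+Lm)/4) ((1+b0-Lm)/4) ((1-b0+Lp)/4) ((1-b0-Lp)/4)
            \<and> S2 ((1+b0+Lp)/4) ((1+b0-Lp)/4) ((1-b0+Lm)/4) ((1-b0-Lm)/4))
   \<or> (t = 2 \<and> S1 ((1+b0+Lp)/4) ((1+b0-Lp)/4) ((1-b0+Lm)/4) ((1-b0-Lm)/4)
            \<and> S2 ((1+b0+Lm)/4) ((1+b0-Lm)/4) ((1-b0+Lp)/4) ((1-b0-Lp)/4)))"

definition gen_group2_state :: "nat \<Rightarrow> complex mat \<Rightarrow> real \<Rightarrow> real \<Rightarrow> real \<Rightarrow> real \<Rightarrow> real \<Rightarrow> bool" where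
  "gen_group2_state t \<rho> b0 b1 b2 b3 b4 \<longleftrightarrow>
     hermitian4 \<rho> \<and> trace4 \<rho> = 1 \<and> group2_form \<rho> b0 b1 b2 b3 b4 \<and> group2_type t \<rho> b0 b1 b2 b3 b4"

definition disc :: "real \<times> real \<Rightarrow> real \<Rightarrow> (real \<times> real) set" where
  "disc P s = {Q. sqrt ((fst Q - fst P)\<^sup>2 + (snd Q - snd P)\<^sup>2) \<le> s}"

definition negp :: "real \<times> real \<Rightarrow> real \<times> real" where
  "negp P = (- fst P, - snd P)"

definition scale_set :: "real \<Rightarrow> (real \<times> real) set \<Rightarrow> (real \<times> real) set" where
  "scale_set e A = (\<lambda>a. (e * fst a, e * snd a)) ` A"

text \<open>sgn(b0) in {+1,-1}; for b0 = 0 we take +1 (the result is symmetric then).\<close>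
definition sgn0 :: "real \<Rightarrow> real" where
  "sgn0 x = (if x < 0 then -1 else 1)"

end

theory Submission
  imports Defs "HOL-Analysis.Topology_Euclidean_Space"
begin

(* The spectra of rho and of its partial transpose have the form (1 +- b0 +- L)/4 with
   L in {L-, L+}, so positivity of either matrix amounts to two inequalities L <= 1 +- b0.
   With E = (b1, -b2) and C = (b4, b3) one has L- = |E - C| and L+ = |E + C| (likewise
   L- = |F - D|, L+ = |F + D|), so these inequalities place +-E in the intersection of a disc
   of radius 1 + b0 about C with a disc of radius 1 - b0 about -C.  The sign of E is fixed by
   the type, and which of 1 +- b0 is the small radius r by the sign of b0: together they give
   the factor (-1)^t sgn b0.  Positivity of the partial transpose is the same condition for the
   opposite point, so both hold on the centrally symmetric lens S.  Two discs about C and -C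
   meet iff 2|C| is at most the sum of the radii.  Positivity is read off the spectrum by the
   Rayleigh principle: the minimum of the form v* M v on the unit sphere is an eigenvalue. *)

section \<open>Positive semidefiniteness via the spectrum\<close>

definition sesq4 :: "complex mat \<Rightarrow> (nat \<Rightarrow> complex) \<Rightarrow> (nat \<Rightarrow> complex) \<Rightarrow> complex" where
  "sesq4 M x y = (\<Sum>i<4. \<Sum>j<4. cnj (x i) * M $$ (i,j) * y j)"

definition sqnorm4 :: "(nat \<Rightarrow> complex) \<Rightarrow> real" where
  "sqnorm4 x = (\<Sum>i<4. (cmod (x i))\<^sup>2)"

lemma psd4_iff_sesq4:
  "psd4 M \<longleftrightarrow> hermitian4 M \<and> (\<forall>v. sesq4 M v v \<in> \<real> \<and> 0 \<le> Re (sesq4 M v v))"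
  unfolding psd4_def sesq4_def Let_def ..

lemma sesq4_cong:
  "(\<And>i. i < 4 \<Longrightarrow> x i = x' i) \<Longrightarrow> (\<And>i. i < 4 \<Longrightarrow> y i = y' i) \<Longrightarrow> sesq4 M x y = sesq4 M x' y'"
  unfolding sesq4_def by (intro sum.cong refl) auto

lemma sqnorm4_cong: "(\<And>i. i < 4 \<Longrightarrow> x i = x' i) \<Longrightarrow> sqnorm4 x = sqnorm4 x'"
  unfolding sqnorm4_def by (intro sum.cong refl) auto

lemma sqnorm4_nonneg: "0 \<le> sqnorm4 x"
  unfolding sqnorm4_def by (simp add: sum_nonneg)

lemma sqnorm4_eq_0_iff: "sqnorm4 x = 0 \<longleftrightarrow> (\<forall>i<4. x i = 0)"
  unfolding sqnorm4_def by (auto simp: sum_nonneg_eq_0_iff)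

lemma sqnorm4_scaleR: "sqnorm4 (\<lambda>i. complex_of_real a * x i) = a\<^sup>2 * sqnorm4 x"
  unfolding sqnorm4_def by (simp add: sum_distrib_left power_mult_distrib norm_mult)

lemma sum_cnj_mult_self: "(\<Sum>i<4. cnj (x i) * x i) = complex_of_real (sqnorm4 x)"
  unfolding sqnorm4_def of_real_sum by (intro sum.cong refl) (metis complex_norm_square mult.commute)

lemma sesq4_eq_0: "(\<And>i. i < 4 \<Longrightarrow> x i = 0) \<Longrightarrow> sesq4 M x x = 0"
  unfolding sesq4_def by simp

lemma sesq4_scaleR:
  "sesq4 M (\<lambda>i. complex_of_real a * x i) (\<lambda>i. complex_of_real a * x i)
   = complex_of_real (a\<^sup>2) * sesq4 M x x"
  unfolding sesq4_def by (simp add: sum_distrib_left power2_eq_square algebra_simps)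

lemma sesq4_add_scaleR:
  "sesq4 M (\<lambda>i. x i + complex_of_real t * y i) (\<lambda>i. x i + complex_of_real t * y i)
   = sesq4 M x x + complex_of_real t * (sesq4 M x y + sesq4 M y x)
     + complex_of_real (t\<^sup>2) * sesq4 M y y"
proof -
  have "cnj (x i + complex_of_real t * y i) * M $$ (i,j) * (x j + complex_of_real t * y j)
     = cnj (x i) * M $$ (i,j) * x j
       + complex_of_real t * (cnj (x i) * M $$ (i,j) * y j + cnj (y i) * M $$ (i,j) * x j)
       + complex_of_real (t\<^sup>2) * (cnj (y i) * M $$ (i,j) * y j)" for i j
    by (simp add: algebra_simps power2_eq_square)
  then show ?thesis
    unfolding sesq4_def by (simp only: sum.distrib flip: sum_distrib_left)
qed

lemma hermitian4_sesq4_cnj: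
  assumes "hermitian4 M"
  shows "sesq4 M x y = cnj (sesq4 M y x)"
proof -
  have "cnj (sesq4 M y x) = (\<Sum>i<4. \<Sum>j<4. y i * cnj (M $$ (i,j)) * cnj (x j))"
    unfolding sesq4_def by simp
  also have "\<dots> = (\<Sum>j<4. \<Sum>i<4. y i * cnj (M $$ (i,j)) * cnj (x j))"
    by (rule sum.swap)
  also have "\<dots> = sesq4 M x y"
    unfolding sesq4_def
  proof (intro sum.cong refl)
    fix i j assume "j \<in> {..<4::nat}" "i \<in> {..<4::nat}"
    then have "cnj (M $$ (i,j)) = M $$ (j,i)"
      using assms unfolding hermitian4_def by (metis lessThan_iff)
    then show "y i * cnj (M $$ (i,j)) * cnj (x j) = cnj (x j) * M $$ (j,i) * y i"
      by simp
  qed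
  finally show ?thesis
    by simp
qed

lemma hermitian4_sesq4_real: "hermitian4 M \<Longrightarrow> sesq4 M x x \<in> \<real>"
  using hermitian4_sesq4_cnj[of M x x] by (simp add: Reals_cnj_iff)

lemma sesq4_mult_mat_vec:
  assumes "M \<in> carrier_mat 4 4"
  shows "sesq4 M x y = (\<Sum>i<4. cnj (x i) * vec_index (M *\<^sub>v Matrix.vec 4 y) i)"
  unfolding sesq4_def using assms
  by (intro sum.cong refl) (simp add: scalar_prod_def atLeast0LessThan sum_distrib_left mult.assoc)

lemma hermitian4_char_matrix:
  assumes "hermitian4 M"
  shows "hermitian4 (char_matrix M (complex_of_real m))"
  unfolding hermitian4_def
proof (intro conjI allI impI)
  have M: "M \<in> carrier_mat 4 4"
    using assms unfolding hermitian4_def by blast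
  then show "char_matrix M (complex_of_real m) \<in> carrier_mat 4 4"
    by simp
  fix i j :: nat
  assume "i < 4" "j < 4"
  moreover from this have "M $$ (i,j) = cnj (M $$ (j,i))"
    using assms unfolding hermitian4_def by blast
  ultimately show "char_matrix M (complex_of_real m) $$ (i,j)
      = cnj (char_matrix M (complex_of_real m) $$ (j,i))"
    using M by (auto simp: char_matrix_def)
qed

lemma sesq4_char_matrix:
  assumes "M \<in> carrier_mat 4 4"
  shows "sesq4 (char_matrix M (complex_of_real m)) x x = sesq4 M x x - complex_of_real (m * sqnorm4 x)"
proof -
  have "cnj (x i) * char_matrix M (complex_of_real m) $$ (i,j) * x j
      = cnj (x i) * M $$ (i,j) * x j - (if i = j then complex_of_real m * (cnj (x i) * x i) else 0)"
    if "i < 4" "j < 4" for i j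
    using assms that by (auto simp: char_matrix_def algebra_simps)
  then have "sesq4 (char_matrix M (complex_of_real m)) x x
      = sesq4 M x x - complex_of_real m * (\<Sum>i<4. cnj (x i) * x i)"
    unfolding sesq4_def by (simp add: sum_subtractf sum_distrib_left)
  then show ?thesis by (simp add: sum_cnj_mult_self)
qed

lemma linear_plus_quadratic_nonneg_imp_zero:
  fixes a b :: real
  assumes "\<And>t. 0 \<le> a * t + b * t\<^sup>2"
  shows "a = 0"
proof (rule ccontr)
  assume "a \<noteq> 0"
  define t where "t = - a / (\<bar>b\<bar> + 1)"
  have "a * t + b * t\<^sup>2 = a\<^sup>2 * (b - \<bar>b\<bar> - 1) / (\<bar>b\<bar> + 1)\<^sup>2"
    unfolding t_def by (simp add: divide_simps power2_eq_square) (simp add: algebra_simps)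
  also have "\<dots> < 0"
    using \<open>a \<noteq> 0\<close> by (intro divide_neg_pos mult_pos_neg) auto
  finally show False
    using assms[of t] by simp
qed

lemma sesq4_null_vector:
  assumes herm: "hermitian4 H"
    and nonneg: "\<And>w. 0 \<le> Re (sesq4 H w w)" and null: "Re (sesq4 H u u) = 0"
  shows "H *\<^sub>v Matrix.vec 4 u = 0\<^sub>v 4"
proof -
  have H: "H \<in> carrier_mat 4 4"
    using herm unfolding hermitian4_def by blast
  define z where "z i = vec_index (H *\<^sub>v Matrix.vec 4 u) i" for i
  have zu: "sesq4 H z u = complex_of_real (sqnorm4 z)"
    unfolding sesq4_mult_mat_vec[OF H] z_def[symmetric] by (rule sum_cnj_mult_self)
  have uz: "sesq4 H u z = complex_of_real (sqnorm4 z)"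
    using hermitian4_sesq4_cnj[OF herm, of u z] zu by simp
  have "0 \<le> (2 * sqnorm4 z) * t + Re (sesq4 H z z) * t\<^sup>2" for t
    using nonneg[of "\<lambda>i. u i + complex_of_real t * z i"] null
    unfolding sesq4_add_scaleR zu uz by (simp add: mult_ac)
  then have "2 * sqnorm4 z = 0"
    by (rule linear_plus_quadratic_nonneg_imp_zero)
  then show ?thesis
    using H sqnorm4_eq_0_iff[of z] by (intro eq_vecI) (auto simp: z_def)
qed

(* C^4 as a product type, so that its unit sphere is compact in the library topology. *)
type_synonym complex4 = "complex \<times> complex \<times> complex \<times> complex"

definition coords4 :: "complex4 \<Rightarrow> nat \<Rightarrow> complex" where
  "coords4 x i = (if i = 0 then fst x else if i = 1 then fst (snd x)
                  else if i = 2 then fst (snd (snd x)) else snd (snd (snd x)))"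

lemma continuous_on_coords4: "continuous_on S (\<lambda>x. coords4 x i)"
  by (cases "i = 0"; cases "i = 1"; cases "i = 2") (simp_all add: coords4_def continuous_intros)

lemma norm_complex4: "norm x = sqrt (sqnorm4 (coords4 x))"
  by (cases x) (simp add: coords4_def sqnorm4_def norm_Pair eval_nat_numeral add.assoc)

lemma coords4_tuple: "i < 4 \<Longrightarrow> coords4 (w 0, w 1, w 2, w 3) i = w i"
  by (auto simp: coords4_def eval_nat_numeral less_Suc_eq)

lemma sesq4_min_on_unit_sphere:
  obtains u where "sqnorm4 u = 1" and "\<And>v. Re (sesq4 M u u) * sqnorm4 v \<le> Re (sesq4 M v v)"
proof -
  define f where "f x = Re (sesq4 M (coords4 x) (coords4 x))" for x
  have "continuous_on (sphere 0 1) f"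
    unfolding f_def sesq4_def by (intro continuous_intros continuous_on_coords4)
  moreover have "(1, 0, 0, 0) \<in> sphere (0::complex4) 1"
    by (simp add: norm_Pair)
  ultimately obtain x0 where x0: "x0 \<in> sphere 0 1" and min: "\<And>y. y \<in> sphere 0 1 \<Longrightarrow> f x0 \<le> f y"
    using continuous_attains_inf[OF compact_sphere] by blast
  define u where "u = coords4 x0"
  have "sqnorm4 u = 1"
    using x0 norm_complex4[of x0] sqnorm4_nonneg unfolding u_def by simp
  moreover have "Re (sesq4 M u u) * sqnorm4 v \<le> Re (sesq4 M v v)" for v
  proof (cases "sqnorm4 v = 0")
    case True
    then show ?thesis
      using sesq4_eq_0[of v M] sqnorm4_eq_0_iff[of v] by simp
  next
    case False
    have v_pos: "0 < sqnorm4 v"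
      using False sqnorm4_nonneg[of v] by simp
    define c where "c = sqrt (sqnorm4 v)"
    have c: "c\<^sup>2 = sqnorm4 v"
      using v_pos by (simp add: c_def)
    define w where "w = (\<lambda>i. complex_of_real (1 / c) * v i)"
    define y where "y = (w 0, w 1, w 2, w 3)"
    have y: "\<And>i. i < 4 \<Longrightarrow> coords4 y i = w i"
      unfolding y_def by (rule coords4_tuple)
    have "sqnorm4 (coords4 y) = sqnorm4 w"
      using y by (rule sqnorm4_cong)
    also have "\<dots> = 1"
      unfolding w_def sqnorm4_scaleR using c v_pos by (simp add: power_divide)
    finally have "f x0 \<le> f y"
      using min norm_complex4[of y] by simp
    also have "f y = Re (sesq4 M w w)"
      unfolding f_def using y y by (rule arg_cong[OF sesq4_cong])
    also have "\<dots> = Re (sesq4 M v v) / c\<^sup>2"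
      unfolding w_def sesq4_scaleR by (simp add: power_divide)
    finally show ?thesis
      using c v_pos by (simp add: u_def f_def pos_le_divide_eq)
  qed
  ultimately show ?thesis
    using that by blast
qed

(* The minimum m of the form on the unit sphere is an eigenvalue: the form of M - m I is
   nonnegative and vanishes at the minimiser. *)
lemma hermitian4_neg_form_imp_neg_eigenvalue:
  assumes herm: "hermitian4 M" and neg: "Re (sesq4 M w w) < 0"
  obtains m where "m < 0" and "eigenvalue M (complex_of_real m)"
proof -
  have M: "M \<in> carrier_mat 4 4"
    using herm unfolding hermitian4_def by blast
  obtain u where u: "sqnorm4 u = 1" and min: "\<And>v. Re (sesq4 M u u) * sqnorm4 v \<le> Re (sesq4 M v v)"
    using sesq4_min_on_unit_sphere[of M] by blast
  define m where "m = Re (sesq4 M u u)"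
  have "m * sqnorm4 w < 0"
    using min[of w] neg unfolding m_def by linarith
  then have "m < 0"
    using sqnorm4_nonneg[of w] by (auto simp: mult_less_0_iff)
  define H where "H = char_matrix M (complex_of_real m)"
  have "H *\<^sub>v Matrix.vec 4 u = 0\<^sub>v 4"
    unfolding H_def
  proof (rule sesq4_null_vector[OF hermitian4_char_matrix[OF herm]])
    show "0 \<le> Re (sesq4 (char_matrix M (complex_of_real m)) v v)" for v
      using min[of v] unfolding sesq4_char_matrix[OF M] m_def by simp
    show "Re (sesq4 (char_matrix M (complex_of_real m)) u u) = 0"
      unfolding sesq4_char_matrix[OF M] m_def u by simp
  qed
  moreover have "Matrix.vec 4 u \<noteq> 0\<^sub>v 4"
  proof
    assume "Matrix.vec 4 u = 0\<^sub>v 4"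
    then have "\<forall>i<4. u i = 0"
      by (metis index_vec index_zero_vec(1))
    then show False
      using u sqnorm4_eq_0_iff[of u] by simp
  qed
  ultimately have "eigenvalue M (complex_of_real m)"
    unfolding eigenvalue_char_matrix[OF M] H_def by (metis vec_carrier)
  with \<open>m < 0\<close> show ?thesis
    using that by blast
qed

lemma psd4_eigenvalue_nonneg:
  assumes psd: "psd4 M" and eig: "eigenvalue M (complex_of_real a)"
  shows "0 \<le> a"
proof -
  have M: "M \<in> carrier_mat 4 4"
    using psd unfolding psd4_def hermitian4_def by blast
  obtain v where v: "v \<in> carrier_vec 4" "v \<noteq> 0\<^sub>v 4" "M *\<^sub>v v = complex_of_real a \<cdot>\<^sub>v v"
    using eig M unfolding eigenvalue_def eigenvector_def by auto
  define x where "x i = vec_index v i" for i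
  have vx: "Matrix.vec 4 x = v"
    using v(1) by (intro eq_vecI) (auto simp: x_def)
  have "sesq4 M x x = (\<Sum>i<4. complex_of_real a * (cnj (x i) * x i))"
    unfolding sesq4_mult_mat_vec[OF M] vx v(3)
    using v(1) by (intro sum.cong refl) (auto simp: x_def)
  also have "\<dots> = complex_of_real (a * sqnorm4 x)"
    by (simp add: sum_distrib_left[symmetric] sum_cnj_mult_self)
  finally have form: "sesq4 M x x = complex_of_real (a * sqnorm4 x)" .
  have "0 \<le> Re (sesq4 M x x)"
    using psd unfolding psd4_iff_sesq4 by blast
  then have "0 \<le> a * sqnorm4 x"
    unfolding form by simp
  moreover have "sqnorm4 x \<noteq> 0"
  proof
    assume "sqnorm4 x = 0"
    then have "v = 0\<^sub>v 4"
      using v(1) sqnorm4_eq_0_iff[of x] by (intro eq_vecI) (auto simp: x_def)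
    with v(2) show False ..
  qed
  ultimately show ?thesis
    using sqnorm4_nonneg[of x] by (simp add: zero_le_mult_iff)
qed

lemma has_spectrum4_eigenvalue_iff:
  assumes "M \<in> carrier_mat 4 4" and "has_spectrum4 M a b c d"
  shows "eigenvalue M k \<longleftrightarrow> k \<in> complex_of_real ` {a, b, c, d}"
proof -
  have "poly (char_poly M) k
      = (k - complex_of_real a) * (k - complex_of_real b) * (k - complex_of_real c) * (k - complex_of_real d)"
    using assms(2) unfolding has_spectrum4_def by (simp only: poly_mult) simp
  then show ?thesis
    unfolding eigenvalue_root_char_poly[OF assms(1)] by auto
qed

lemma psd4_iff_spectrum_nonneg:
  assumes herm: "hermitian4 M" and spec: "has_spectrum4 M a b c d"
  shows "psd4 M \<longleftrightarrow> 0 \<le> a \<and> 0 \<le> b \<and> 0 \<le> c \<and> 0 \<le> d"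
proof -
  have M: "M \<in> carrier_mat 4 4"
    using herm unfolding hermitian4_def by blast
  note eig_iff = has_spectrum4_eigenvalue_iff[OF M spec]
  show ?thesis
  proof
    assume psd: "psd4 M"
    have "0 \<le> x" if "x \<in> {a, b, c, d}" for x
    proof (rule psd4_eigenvalue_nonneg[OF psd])
      show "eigenvalue M (complex_of_real x)"
        using eig_iff that by blast
    qed
    then show "0 \<le> a \<and> 0 \<le> b \<and> 0 \<le> c \<and> 0 \<le> d"
      by auto
  next
    assume nonneg: "0 \<le> a \<and> 0 \<le> b \<and> 0 \<le> c \<and> 0 \<le> d"
    have "0 \<le> Re (sesq4 M v v)" for v
    proof (rule ccontr)
      assume "\<not> 0 \<le> Re (sesq4 M v v)"
      then have "Re (sesq4 M v v) < 0"
        by simp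
      then obtain m where m: "m < 0" "eigenvalue M (complex_of_real m)"
        by (rule hermitian4_neg_form_imp_neg_eigenvalue[OF herm])
      then have "m \<in> {a, b, c, d}"
        using eig_iff[of "complex_of_real m"] by (simp add: inj_image_mem_iff)
      then show False
        using m(1) nonneg by auto
    qed
    then show "psd4 M"
      using herm hermitian4_sesq4_real unfolding psd4_iff_sesq4 by blast
  qed
qed

section \<open>Lenses cut out by two discs\<close>

lemma cball_Int_cball_ne_iff:
  fixes a b :: "'a::real_normed_vector"
  assumes "0 \<le> r" and "0 \<le> s"
  shows "cball a r \<inter> cball b s \<noteq> {} \<longleftrightarrow> dist a b \<le> r + s"
proof
  assume "cball a r \<inter> cball b s \<noteq> {}"
  then obtain x where "dist a x \<le> r" and "dist b x \<le> s"
    by auto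
  then show "dist a b \<le> r + s"
    using dist_triangle2[of a b x] by linarith
next
  assume close: "dist a b \<le> r + s"
  show "cball a r \<inter> cball b s \<noteq> {}"
  proof (cases "dist a b \<le> r")
    case True
    then have "b \<in> cball a r \<inter> cball b s"
      using assms by simp
    then show ?thesis
      by blast
  next
    case False
    define d where "d = dist a b"
    have d: "0 < d" "r < d"
      using False assms unfolding d_def by linarith+
    define x where "x = a + (r / d) *\<^sub>R (b - a)"
    have "dist a x = r"
      using d assms by (simp add: x_def dist_norm d_def norm_minus_commute)
    moreover have "dist b x = d - r"
    proof -
      have "b - x = (1 - r / d) *\<^sub>R (b - a)"
        by (simp add: x_def algebra_simps)
      then have "dist b x = (1 - r / d) * d"
        using d by (simp add: dist_norm d_def norm_minus_commute)
      then show ?thesis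
        using d by (simp add: left_diff_distrib)
    qed
    ultimately have "x \<in> cball a r \<inter> cball b s"
      using close unfolding d_def by simp
    then show ?thesis
      by blast
  qed
qed

lemma cball_Int_cball_uminus_ne_iff:
  fixes P :: "'a::real_normed_vector"
  assumes "0 \<le> r" and "0 \<le> s"
  shows "cball P r \<inter> cball (- P) s \<noteq> {} \<longleftrightarrow> 2 * norm P \<le> r + s"
  using cball_Int_cball_ne_iff[OF assms, of P "- P"]
  by (simp add: dist_norm flip: scaleR_2)

lemma disc_eq_cball: "disc P s = cball P s"
  by (cases P) (auto simp: disc_def dist_Pair_Pair dist_real_def power2_commute)

lemma negp_eq_uminus: "negp P = - P"
  by (simp add: negp_def prod_eq_iff)

lemma mem_scale_set_iff:
  assumes "e = 1 \<or> e = -1"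
  shows "Q \<in> scale_set e A \<longleftrightarrow> e *\<^sub>R Q \<in> A"
proof -
  have scale_set: "scale_set e A = (\<lambda>a. e *\<^sub>R a) ` A"
    unfolding scale_set_def by (simp add: scaleR_prod_def)
  have involution: "e *\<^sub>R e *\<^sub>R x = x" for x :: "real \<times> real"
    using assms by auto
  show ?thesis
    unfolding scale_set by (metis image_iff involution)
qed

lemma norm_Pair_le_iff:
  fixes x y s :: real
  assumes "0 \<le> s"
  shows "norm (x, y) \<le> s \<longleftrightarrow> x\<^sup>2 + y\<^sup>2 \<le> s\<^sup>2"
proof -
  have "norm (x, y) = sqrt (x\<^sup>2 + y\<^sup>2)"
    by (simp add: norm_Pair)
  moreover have "s = sqrt (s\<^sup>2)"
    using assms by simp
  ultimately show ?thesis
    by (metis real_sqrt_le_iff)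
qed

lemma lens_regions:
  fixes P Q :: "'a::real_normed_vector"
  assumes b0: "\<bar>b0\<bar> \<le> 1" and e: "e = 1 \<or> e = -1"
    and val: "val \<longleftrightarrow> e *\<^sub>R Q \<in> cball P (1 + b0) \<inter> cball (- P) (1 - b0)"
    and ppt: "ppt \<longleftrightarrow> - e *\<^sub>R Q \<in> cball P (1 + b0) \<inter> cball (- P) (1 - b0)"
  defines "V \<equiv> cball P (1 - \<bar>b0\<bar>) \<inter> cball (- P) (1 + \<bar>b0\<bar>)"
    and "S \<equiv> cball P (1 - \<bar>b0\<bar>) \<inter> cball (- P) (1 - \<bar>b0\<bar>)"
  shows "val \<longleftrightarrow> (- e * sgn0 b0) *\<^sub>R Q \<in> V"
    and "Q \<in> S \<Longrightarrow> val \<and> ppt"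
    and "(- e * sgn0 b0) *\<^sub>R Q \<in> V - S \<Longrightarrow> val \<and> \<not> ppt"
proof -
  have dists: "dist P (- Q) = dist (- P) Q" "dist (- P) (- Q) = dist P Q"
    using dist_minus[of "- P" Q] dist_minus[of P Q] by simp_all
  have mem: "c *\<^sub>R Q \<in> cball P a \<inter> cball (- P) b \<longleftrightarrow>
      (if c = 1 then dist P Q \<le> a \<and> dist (- P) Q \<le> b else dist (- P) Q \<le> a \<and> dist P Q \<le> b)"
    if "c = 1 \<or> c = -1" for c a b
    using that dists by auto
  have signs: "- e = 1 \<or> - e = -1" "- e * sgn0 b0 = 1 \<or> - e * sgn0 b0 = -1"
    using e by (auto simp: sgn0_def)
  note val' = val[unfolded mem[OF e]] and ppt' = ppt[unfolded mem[OF signs(1)]]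
  show "val \<longleftrightarrow> (- e * sgn0 b0) *\<^sub>R Q \<in> V"
    unfolding V_def mem[OF signs(2)] val' using e b0 by (auto simp: sgn0_def split: if_splits)
  show "Q \<in> S \<Longrightarrow> val \<and> ppt"
    using mem[of 1] e b0 unfolding S_def val' ppt' by auto
  show "(- e * sgn0 b0) *\<^sub>R Q \<in> V - S \<Longrightarrow> val \<and> \<not> ppt"
    unfolding V_def S_def Diff_iff mem[OF signs(2)] val' ppt' using e b0
    by (auto simp: sgn0_def split: if_splits)
qed

section \<open>Generalised Group 2 X-states\<close>

lemma hermitian4_ptrans:
  assumes "hermitian4 \<rho>"
  shows "hermitian4 (ptrans \<rho>)"
  unfolding hermitian4_def
proof (intro conjI allI impI)
  show "ptrans \<rho> \<in> carrier_mat 4 4"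
    unfolding ptrans_def by simp
  fix i j :: nat
  assume ij: "i < 4" "j < 4"
  then have "2 * (i div 2) + j mod 2 < 4" and "2 * (j div 2) + i mod 2 < 4"
    by presburger+
  then have "\<rho> $$ (2 * (i div 2) + j mod 2, 2 * (j div 2) + i mod 2)
      = cnj (\<rho> $$ (2 * (j div 2) + i mod 2, 2 * (i div 2) + j mod 2))"
    using assms unfolding hermitian4_def by blast
  then show "ptrans \<rho> $$ (i, j) = cnj (ptrans \<rho> $$ (j, i))"
    unfolding ptrans_def using ij by simp
qed

lemma psd4_iff_paired_spectrum:
  assumes "hermitian4 M" and "0 \<le> L" and "0 \<le> L'"
    and "has_spectrum4 M ((1 + b0 + L) / 4) ((1 + b0 - L) / 4) ((1 - b0 + L') / 4) ((1 - b0 - L') / 4)"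
  shows "psd4 M \<longleftrightarrow> L \<le> 1 + b0 \<and> L' \<le> 1 - b0"
  using psd4_iff_spectrum_nonneg[OF assms(1,4)] assms(2,3) by auto

lemma gen_group2_state_psd4_iff:
  assumes "gen_group2_state t \<rho> b0 b1 b2 b3 b4"
  defines "La \<equiv> if t = 1 then Lminus b1 b2 b3 b4 else Lplus b1 b2 b3 b4"
    and "Lb \<equiv> if t = 1 then Lplus b1 b2 b3 b4 else Lminus b1 b2 b3 b4"
  shows "valid \<rho> \<longleftrightarrow> La \<le> 1 + b0 \<and> Lb \<le> 1 - b0"
    and "psd4 (ptrans \<rho>) \<longleftrightarrow> Lb \<le> 1 + b0 \<and> La \<le> 1 - b0"
proof -
  have herm: "hermitian4 \<rho>"
    using assms(1) unfolding gen_group2_state_def by blast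
  have spectra:
    "has_spectrum4 \<rho> ((1 + b0 + La) / 4) ((1 + b0 - La) / 4) ((1 - b0 + Lb) / 4) ((1 - b0 - Lb) / 4)"
    "has_spectrum4 (ptrans \<rho>) ((1 + b0 + Lb) / 4) ((1 + b0 - Lb) / 4) ((1 - b0 + La) / 4) ((1 - b0 - La) / 4)"
    using assms(1) unfolding gen_group2_state_def group2_type_def La_def Lb_def Let_def by auto
  have "0 \<le> La" "0 \<le> Lb"
    by (simp_all add: La_def Lb_def Lplus_def Lminus_def)
  then show "valid \<rho> \<longleftrightarrow> La \<le> 1 + b0 \<and> Lb \<le> 1 - b0"
    and "psd4 (ptrans \<rho>) \<longleftrightarrow> Lb \<le> 1 + b0 \<and> La \<le> 1 - b0"
    using psd4_iff_paired_spectrum[OF herm _ _ spectra(1)]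
      psd4_iff_paired_spectrum[OF hermitian4_ptrans[OF herm] _ _ spectra(2)]
    unfolding valid_def by auto
qed

lemma gen_group2_state_regions:
  fixes P Q :: "real \<times> real"
  assumes state: "gen_group2_state t \<rho> b0 b1 b2 b3 b4" and b0: "\<bar>b0\<bar> \<le> 1"
    and dist_Lminus: "dist Q P = Lminus b1 b2 b3 b4" and dist_Lplus: "dist Q (- P) = Lplus b1 b2 b3 b4"
  defines "\<epsilon> \<equiv> (-1) ^ t * sgn0 b0"
  shows "let V = disc P (1 - \<bar>b0\<bar>) \<inter> disc (negp P) (1 + \<bar>b0\<bar>);
             S = disc P (1 - \<bar>b0\<bar>) \<inter> disc (negp P) (1 - \<bar>b0\<bar>); Ent = V - S in
     (valid \<rho> \<longleftrightarrow> Q \<in> scale_set \<epsilon> V)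
   \<and> (Q \<in> S \<longrightarrow> separable \<rho>)
   \<and> (Q \<in> scale_set \<epsilon> Ent \<longrightarrow> entangled \<rho>)
   \<and> (V \<noteq> {} \<longleftrightarrow> (fst P)\<^sup>2 + (snd P)\<^sup>2 \<le> 1)
   \<and> (S \<noteq> {} \<longleftrightarrow> (fst P)\<^sup>2 + (snd P)\<^sup>2 \<le> (1 - \<bar>b0\<bar>)\<^sup>2)"
proof -
  have t: "t = 1 \<or> t = 2"
    using state unfolding gen_group2_state_def group2_type_def Let_def by blast
  \<comment> \<open>For Type I the validity conditions constrain Q itself, for Type II they constrain -Q.\<close>
  define e :: real where "e = (-1) ^ (t + 1)"
  have e: "e = 1 \<or> e = -1" and \<epsilon>: "\<epsilon> = - e * sgn0 b0"
    using t by (auto simp: e_def \<epsilon>_def)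
  have \<epsilon>_sign: "\<epsilon> = 1 \<or> \<epsilon> = -1"
    using e by (auto simp: \<epsilon> sgn0_def)
  have "dist P Q = Lminus b1 b2 b3 b4" "dist (- P) Q = Lplus b1 b2 b3 b4"
    "dist P (- Q) = Lplus b1 b2 b3 b4" "dist (- P) (- Q) = Lminus b1 b2 b3 b4"
    using dist_Lminus dist_Lplus dist_minus[of P Q] dist_minus[of "- P" Q]
    by (simp_all add: dist_commute)
  then have "valid \<rho> \<longleftrightarrow> e *\<^sub>R Q \<in> cball P (1 + b0) \<inter> cball (- P) (1 - b0)"
    and "psd4 (ptrans \<rho>) \<longleftrightarrow> - e *\<^sub>R Q \<in> cball P (1 + b0) \<inter> cball (- P) (1 - b0)"
    using gen_group2_state_psd4_iff[OF state] t by (auto simp: e_def)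
  note lens = lens_regions[OF b0 e this, folded \<epsilon>]
  have V_ne: "cball P (1 - \<bar>b0\<bar>) \<inter> cball (- P) (1 + \<bar>b0\<bar>) \<noteq> {}
      \<longleftrightarrow> (fst P)\<^sup>2 + (snd P)\<^sup>2 \<le> 1"
    using cball_Int_cball_uminus_ne_iff[of "1 - \<bar>b0\<bar>" "1 + \<bar>b0\<bar>" P]
      norm_Pair_le_iff[of 1 "fst P" "snd P"] b0
    by simp
  have "cball P (1 - \<bar>b0\<bar>) \<inter> cball (- P) (1 - \<bar>b0\<bar>) \<noteq> {} \<longleftrightarrow> norm P \<le> 1 - \<bar>b0\<bar>"
    using cball_Int_cball_uminus_ne_iff[of "1 - \<bar>b0\<bar>" "1 - \<bar>b0\<bar>" P] b0 by auto
  also have "\<dots> \<longleftrightarrow> (fst P)\<^sup>2 + (snd P)\<^sup>2 \<le> (1 - \<bar>b0\<bar>)\<^sup>2"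
    using norm_Pair_le_iff[of "1 - \<bar>b0\<bar>" "fst P" "snd P"] b0 by simp
  finally have S_ne: "cball P (1 - \<bar>b0\<bar>) \<inter> cball (- P) (1 - \<bar>b0\<bar>) \<noteq> {}
      \<longleftrightarrow> (fst P)\<^sup>2 + (snd P)\<^sup>2 \<le> (1 - \<bar>b0\<bar>)\<^sup>2" .
  show ?thesis
    using lens V_ne S_ne
    unfolding Let_def disc_eq_cball negp_eq_uminus mem_scale_set_iff[OF \<epsilon>_sign]
      separable_def entangled_def
    by blast
qed

theorem proposition2:
  fixes \<rho> :: "complex mat" and t :: nat and b0 b1 b2 b3 b4 :: real
  assumes "t \<in> {1, 2}" and "\<bar>b0\<bar> \<le> 1"
    and "gen_group2_state t \<rho> b0 b1 b2 b3 b4"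
  defines "C \<equiv> (b4, b3)" and "D \<equiv> (b1, b2)" and "E \<equiv> (b1, - b2)" and "F \<equiv> (b4, - b3)"
    and "r \<equiv> 1 - \<bar>b0\<bar>" and "R \<equiv> 1 + \<bar>b0\<bar>"
    and "\<epsilon> \<equiv> (-1) ^ t * sgn0 b0"
  shows
    "(let V = disc C r \<inter> disc (negp C) R; S = disc C r \<inter> disc (negp C) r; Ent = V - S in
        (valid \<rho> \<longleftrightarrow> E \<in> scale_set \<epsilon> V)
      \<and> (E \<in> S \<longrightarrow> separable \<rho>)
      \<and> (E \<in> scale_set \<epsilon> Ent \<longrightarrow> entangled \<rho>)
      \<and> (V \<noteq> {} \<longleftrightarrow> b3\<^sup>2 + b4\<^sup>2 \<le> 1)
      \<and> (S \<noteq> {} \<longleftrightarrow> b3\<^sup>2 + b4\<^sup>2 \<le> (1 - \<bar>b0\<bar>)\<^sup>2))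
   \<and> (let V' = disc D r \<inter> disc (negp D) R; S' = disc D r \<inter> disc (negp D) r; Ent' = V' - S' in
        (valid \<rho> \<longleftrightarrow> F \<in> scale_set \<epsilon> V')
      \<and> (F \<in> S' \<longrightarrow> separable \<rho>)
      \<and> (F \<in> scale_set \<epsilon> Ent' \<longrightarrow> entangled \<rho>)
      \<and> (V' \<noteq> {} \<longleftrightarrow> b1\<^sup>2 + b2\<^sup>2 \<le> 1)
      \<and> (S' \<noteq> {} \<longleftrightarrow> b1\<^sup>2 + b2\<^sup>2 \<le> (1 - \<bar>b0\<bar>)\<^sup>2))"
proof -
  have square_neg_diff: "(- x - y)\<^sup>2 = (x + y)\<^sup>2" for x y :: real
    by (simp add: power2_eq_square algebra_simps)
  have "dist E C = Lminus b1 b2 b3 b4" "dist E (- C) = Lplus b1 b2 b3 b4"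
    "dist F D = Lminus b1 b2 b3 b4" "dist F (- D) = Lplus b1 b2 b3 b4"
    unfolding C_def D_def E_def F_def Lminus_def Lplus_def
    by (simp_all add: dist_Pair_Pair dist_real_def square_neg_diff power2_commute add.commute)
  from gen_group2_state_regions[OF assms(3,2) this(1,2)] gen_group2_state_regions[OF assms(3,2) this(3,4)]
  show ?thesis
    unfolding C_def D_def r_def R_def \<epsilon>_def by (simp add: add.commute)
qed

end
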